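(* Assume the CFL condition, let $k\in\mathbb R$, and let $\eta_i^n=|U_i^n-k|$ and $Q_i^n=\hat f(U_i^n\vee k,U_{i+1}^n\vee k)-\hat f(U_i^n\wedge k,U_{i+1}^n\wedge k)$. Then for all $i,n$, $$\eta_i^{n+1}-\eta_i^n+\Delta t\,D_-Q_i^n-\Delta t\,D_-D_+|A(U_i^n)-A(k)|\le\Delta t\,\operatorname{sgn}(U_i^{n+1}-k)\,b\,\mathcal L\langle U^n\rangle_i .$$
   Context: Let $f,a:\mathbb R\to\mathbb R$ be Lipschitz, $a\ge0$ bounded, $f(0)=0$, $A(u)=\int_0^ua(s)ds$, $b\ge0$, $\lambda\in(0,1)$, $c_\lambda>0$, $\mathcal L[u](x)=c_\lambda\int_{|z|>0}\frac{u(x+z)-u(x)}{|z|^{1+\lambda}}dz$. Let $\hat f:\mathbb R^2\to\mathbb R$ be $C^1$ and Lipschitz, consistent ($\hat f(u,u)=f(u)$), nondecreasing in its first and nonincreasing in its second argument. Grid: $x_i=i\Delta x$, $I_i=[x_i,x_{i+1})$, $t_n=n\Delta t$. Weights $G^i_j=\int_{I_i}\mathcal L[\mathbf 1_{I_j}](x)dx$; these satisfy $G^i_j\ge0$ for $i\ne j$, $\sum_j|G^i_j|<\infty$, $\sum_iG^i_j=\sum_jG^i_j=0$, $G^i_j=G^j_i$, $G^{i+1}_{j+1}=G^i_j$, and $G^i_i=-d_\lambda\Delta x^{1-\lambda}$ with $d_\lambda=c_\lambda\big(\int_{|z|<1}|z|^{-\lambda}dz+\int_{|z|>1}|z|^{-1-\lambda}dz\big)$.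 $D_\pm U_i=\pm(U_{i\pm1}-U_i)/\Delta x$, $\mathcal L\langle U\rangle_i=\frac1{\Delta x}\sum_jG^i_jU_j$. Scheme: $U_i^{n+1}=U_i^n-\Delta t\,D_-\big[\hat f(U_i^n,U_{i+1}^n)-D_+A(U_i^n)\big]+\Delta t\,b\,\mathcal L\langle U^n\rangle_i$, $U^0_i=\frac1{\Delta x}\int_{I_i}u_0$ with $u_0\in L^1(\mathbb R)\cap BV(\mathbb R)$. CFL condition: $\frac{\Delta t}{\Delta x}(\|\partial_{1}\hat f\|_\infty+\|\partial_{2}\hat f\|_\infty)+\frac{2\Delta t}{\Delta x^2}\|a\|_\infty+b\,d_\lambda\frac{\Delta t}{\Delta x^\lambda}\le1$. $x\vee y=\max\{x,y\}$, $x\wedge y=\min\{x,y\}$; $\operatorname{sgn}$ is the sign function (any value in $[-1,1]$ at $0$). *)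

theory Defs
  imports "HOL-Analysis.Analysis"
begin

text \<open>Primitive of the diffusion coefficient: A(u) = int_0^u a(s) ds (oriented).\<close>
definition Aint :: "(real \<Rightarrow> real) \<Rightarrow> real \<Rightarrow> real" where
  "Aint a u = interval_lebesgue_integral lborel (ereal 0) (ereal u) a"

definition frac_lap :: "real \<Rightarrow> real \<Rightarrow> (real \<Rightarrow> real) \<Rightarrow> real \<Rightarrow> real" where
  "frac_lap c lam w x =
     c * set_lebesgue_integral lborel {z. 0 < \<bar>z\<bar>} (\<lambda>z. (w (x + z) - w x) / \<bar>z\<bar> powr (1 + lam))"

definition cell :: "real \<Rightarrow> int \<Rightarrow> real set" where
  "cell dx i = {real_of_int i * dx ..< real_of_int (i + 1) * dx}"

definition weight :: "real \<Rightarrow> real \<Rightarrow> real \<Rightarrow> int \<Rightarrow> int \<Rightarrow> real" where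
  "weight c lam dx i j =
     set_lebesgue_integral lborel (cell dx i) (frac_lap c lam (indicator (cell dx j)))"

definition lap_disc :: "real \<Rightarrow> real \<Rightarrow> real \<Rightarrow> (int \<Rightarrow> real) \<Rightarrow> int \<Rightarrow> real" where
  "lap_disc c lam dx V i = (1 / dx) * infsum (\<lambda>j. weight c lam dx i j * V j) UNIV"

definition dlam :: "real \<Rightarrow> real \<Rightarrow> real" where
  "dlam c lam = c * (set_lebesgue_integral lborel {z. \<bar>z\<bar> < 1} (\<lambda>z. \<bar>z\<bar> powr (- lam))
                   + set_lebesgue_integral lborel {z. 1 < \<bar>z\<bar>} (\<lambda>z. \<bar>z\<bar> powr (- 1 - lam)))"

definition Dminus :: "real \<Rightarrow> (int \<Rightarrow> real) \<Rightarrow> int \<Rightarrow> real" where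
  "Dminus dx W i = (W i - W (i - 1)) / dx"

definition Dplus :: "real \<Rightarrow> (int \<Rightarrow> real) \<Rightarrow> int \<Rightarrow> real" where
  "Dplus dx W i = (W (i + 1) - W i) / dx"

text \<open>The numerical scheme; U n i = U_i^n.\<close>
primrec scheme :: "(real \<Rightarrow> real \<Rightarrow> real) \<Rightarrow> (real \<Rightarrow> real) \<Rightarrow> real \<Rightarrow> real \<Rightarrow> real
    \<Rightarrow> real \<Rightarrow> real \<Rightarrow> (real \<Rightarrow> real) \<Rightarrow> nat \<Rightarrow> int \<Rightarrow> real" where
  "scheme fh a b c lam dx dt u0 0 =
     (\<lambda>i. (1 / dx) * set_lebesgue_integral lborel (cell dx i) u0)"
| "scheme fh a b c lam dx dt u0 (Suc n) =
     (let V = scheme fh a b c lam dx dt u0 n in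
      (\<lambda>i. V i - dt * Dminus dx (\<lambda>j. fh (V j) (V (j + 1)) - Dplus dx (\<lambda>m. Aint a (V m)) j) i
             + dt * b * lap_disc c lam dx V i))"

definition bounded_pvar :: "(real \<Rightarrow> real) \<Rightarrow> bool" where
  "bounded_pvar v = (\<exists>M. \<forall>xs. sorted xs \<longrightarrow>
       (\<Sum>k < length xs - 1. \<bar>v (xs ! (k + 1)) - v (xs ! k)\<bar>) \<le> M)"

definition BV :: "(real \<Rightarrow> real) \<Rightarrow> bool" where
  "BV u = (\<exists>v. (AE x in lborel. u x = v x) \<and> bounded_pvar v)"

end

theory Submission imports Defs begin

(*
  Without the nonlocal term, one step of the scheme is a conservative three-point
  map U^{n+1}_i = H(U^n_{i-1}, U^n_i, U^n_{i+1}) with H(k,k,k) = k.  The partial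
  derivatives of the numerical flux are bounded by its Lipschitz constant, so the
  mean value theorem bounds its slopes, and the (local part of the) CFL condition
  then makes H nondecreasing in each argument.  Any such H satisfies
    |H(p,q,r) - k| <= H(p v k, q v k, r v k) - H(p ^ k, q ^ k, r ^ k),
  and since A is nondecreasing the right-hand side equals
    |U^n_i - k| - dt D_- Q^n_i + dt D_- D_+ |A(U^n_i) - A(k)|.
  The nonlocal term is absorbed by |x + y| <= |x| + s y, valid whenever s is a
  sign of x + y.
*)

lemma has_derivative_partials:
  fixes F :: "real \<Rightarrow> real \<Rightarrow> real"
  assumes "((\<lambda>p. F (fst p) (snd p)) has_derivative (\<lambda>h. F1 * fst h + F2 * snd h)) (at (x, y))"
  shows "((\<lambda>t. F t y) has_real_derivative F1) (at x)"
    and "((\<lambda>t. F x t) has_real_derivative F2) (at y)"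
proof -
  have "((\<lambda>t. (t, y)) has_derivative (\<lambda>h. (h, 0))) (at x)"
    by (auto intro!: derivative_eq_intros)
  from has_derivative_compose[OF this assms]
  show "((\<lambda>t. F t y) has_real_derivative F1) (at x)"
    by (simp add: has_field_derivative_def mult.commute[of _ F1])
  have "((\<lambda>t. (x, t)) has_derivative (\<lambda>h. (0, h))) (at y)"
    by (auto intro!: derivative_eq_intros)
  from has_derivative_compose[OF this assms]
  show "((\<lambda>t. F x t) has_real_derivative F2) (at y)"
    by (simp add: has_field_derivative_def mult.commute[of _ F2])
qed

lemma deriv_abs_le_lipschitz:
  fixes g :: "real \<Rightarrow> real"
  assumes "(g has_real_derivative D) (at x)" and "L-lipschitz_on UNIV g"
  shows "\<bar>D\<bar> \<le> L"
proof -
  have lim: "((\<lambda>h. (g (x + h) - g x) / h) \<longlongrightarrow> D) (at 0)"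
    using assms(1) by (simp add: DERIV_def)
  have "\<bar>(g (x + h) - g x) / h\<bar> \<le> L" if "h \<noteq> 0" for h
  proof -
    have "\<bar>g (x + h) - g x\<bar> \<le> L * \<bar>h\<bar>"
      using lipschitz_onD[OF assms(2), of "x + h" x] by (simp add: dist_real_def)
    then show ?thesis using that by (simp add: divide_le_eq)
  qed
  then have "eventually (\<lambda>h. norm ((g (x + h) - g x) / h) \<le> L) (at 0)"
    by (auto simp: eventually_at_filter)
  from Lim_norm_ubound[OF _ lim this] show ?thesis by simp
qed

lemma increment_bounds_of_deriv:
  fixes g g' :: "real \<Rightarrow> real"
  assumes deriv: "\<And>x. (g has_real_derivative g' x) (at x)"
    and lower: "\<And>x. m \<le> g' x" and upper: "\<And>x. g' x \<le> M" and "y \<le> z"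
  shows "m * (z - y) \<le> g z - g y" and "g z - g y \<le> M * (z - y)"
proof -
  have "\<exists>w. g z - g y = (z - y) * g' w"
  proof (cases "y = z")
    case False
    with \<open>y \<le> z\<close> have "y < z" by simp
    from MVT2[OF this, of g g'] deriv show ?thesis by blast
  qed simp
  then obtain w where w: "g z - g y = (z - y) * g' w" by blast
  show "m * (z - y) \<le> g z - g y"
    unfolding w using lower[of w] \<open>y \<le> z\<close> by (simp add: mult.commute mult_right_mono)
  show "g z - g y \<le> M * (z - y)"
    unfolding w using upper[of w] \<open>y \<le> z\<close> by (simp add: mult.commute mult_right_mono)
qed

lemma abs_le_SUP_abs:
  fixes g :: "'a \<Rightarrow> real"
  assumes "\<And>x. \<bar>g x\<bar> \<le> L"
  shows "\<bar>g x\<bar> \<le> (SUP y. \<bar>g y\<bar>)"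
  using assms by (intro cSUP_upper) (auto simp: bdd_above_def)

lemma Aint_has_real_derivative:
  assumes "continuous_on UNIV a"
  shows "(Aint a has_real_derivative a x) (at x)"
proof -
  have "at x within {min 0 (x - 1)..max 0 (x + 1)} = at x"
    by (intro at_within_interior) auto
  then show ?thesis
    using interval_integral_FTC2[of "min 0 (x - 1)" 0 "max 0 (x + 1)" a x] assms
    by (auto simp: Aint_def[abs_def] zero_ereal_def continuous_on_subset
                   has_real_derivative_iff_has_vector_derivative
             split del: if_split)
qed

text \<open>The constant \<open>d_\<lambda>\<close> is nonnegative, so the nonlocal part of the CFL condition
  can be dropped.\<close>
lemma dlam_nonneg:
  assumes "0 \<le> c"
  shows "0 \<le> dlam c lam"
  unfolding dlam_def set_lebesgue_integral_def using assms
  by (intro mult_nonneg_nonneg add_nonneg_nonneg integral_nonneg) (auto simp: indicator_def)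

lemma flux_slope_bounds:
  fixes F F1 F2 :: "real \<Rightarrow> real \<Rightarrow> real"
  assumes deriv: "\<forall>x y. ((\<lambda>p. F (fst p) (snd p)) has_derivative
                       (\<lambda>h. F1 x y * fst h + F2 x y * snd h)) (at (x, y))"
    and lip: "L-lipschitz_on UNIV (\<lambda>p. F (fst p) (snd p))"
  shows "x' \<le> x \<Longrightarrow> F x y - F x' y \<le> (SUP p. \<bar>F1 (fst p) (snd p)\<bar>) * (x - x')"
    and "y' \<le> y \<Longrightarrow> F x y' - F x y \<le> (SUP p. \<bar>F2 (fst p) (snd p)\<bar>) * (y - y')"
proof -
  have d1: "((\<lambda>t. F t v) has_real_derivative F1 u v) (at u)" for u v
    using has_derivative_partials(1)[OF deriv[rule_format]] .
  have d2: "((\<lambda>t. F u t) has_real_derivative F2 u v) (at v)" for u v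
    using has_derivative_partials(2)[OF deriv[rule_format]] .
  have lip1: "L-lipschitz_on UNIV (\<lambda>t. F t v)" for v
    using lipschitz_onD[OF lip, of "(_, v)" "(_, v)"] lipschitz_on_nonneg[OF lip]
    by (intro lipschitz_onI) (auto simp: dist_Pair_Pair)
  have lip2: "L-lipschitz_on UNIV (\<lambda>t. F u t)" for u
    using lipschitz_onD[OF lip, of "(u, _)" "(u, _)"] lipschitz_on_nonneg[OF lip]
    by (intro lipschitz_onI) (auto simp: dist_Pair_Pair)
  let ?S1 = "SUP p. \<bar>F1 (fst p) (snd p)\<bar>" and ?S2 = "SUP p. \<bar>F2 (fst p) (snd p)\<bar>"
  have F1_bound: "\<bar>F1 u v\<bar> \<le> ?S1" for u v
    using abs_le_SUP_abs[of "\<lambda>p. F1 (fst p) (snd p)" L "(u, v)"]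
      deriv_abs_le_lipschitz[OF d1 lip1] by auto
  have F2_bound: "\<bar>F2 u v\<bar> \<le> ?S2" for u v
    using abs_le_SUP_abs[of "\<lambda>p. F2 (fst p) (snd p)" L "(u, v)"]
      deriv_abs_le_lipschitz[OF d2 lip2] by auto
  show "x' \<le> x \<Longrightarrow> F x y - F x' y \<le> ?S1 * (x - x')"
    by (rule increment_bounds_of_deriv(2)[where g = "\<lambda>t. F t y" and m = "- ?S1"])
       (use d1 F1_bound in \<open>auto simp: abs_le_iff minus_le_iff\<close>)
  have "y' \<le> y \<Longrightarrow> - ?S2 * (y - y') \<le> F x y - F x y'"
    by (rule increment_bounds_of_deriv(1)[where g = "\<lambda>t. F x t" and M = "?S2"])
       (use d2 F2_bound in \<open>auto simp: abs_le_iff minus_le_iff\<close>)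
  then show "y' \<le> y \<Longrightarrow> F x y' - F x y \<le> ?S2 * (y - y')"
    by simp
qed

lemma Aint_slope_bounds:
  assumes "La-lipschitz_on UNIV a" and "\<And>s. 0 \<le> a s" and "bounded (range a)" and "y \<le> z"
  shows "0 \<le> Aint a z - Aint a y \<and> Aint a z - Aint a y \<le> (SUP s. \<bar>a s\<bar>) * (z - y)"
proof -
  have deriv: "(Aint a has_real_derivative a x) (at x)" for x
    using Aint_has_real_derivative[OF lipschitz_on_continuous_on[OF assms(1)]] .
  obtain B where "\<And>s. \<bar>a s\<bar> \<le> B" using assms(3) by (auto simp: bounded_iff)
  then have "a s \<le> (SUP s. \<bar>a s\<bar>)" for s
    using abs_le_SUP_abs[of a B s] by simp
  then show ?thesis
    using increment_bounds_of_deriv[OF deriv, of 0 "SUP s. \<bar>a s\<bar>", OF assms(2) _ assms(4)] by auto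
qed

lemma monotone_map_kato:
  fixes H :: "real \<Rightarrow> real \<Rightarrow> real \<Rightarrow> real"
  assumes mono: "\<And>p q r p' q' r'. p' \<le> p \<Longrightarrow> q' \<le> q \<Longrightarrow> r' \<le> r \<Longrightarrow> H p' q' r' \<le> H p q r"
    and fixed: "H k k k = k"
  shows "\<bar>H p q r - k\<bar> \<le> H (max p k) (max q k) (max r k) - H (min p k) (min q k) (min r k)"
proof -
  have "H (min p k) (min q k) (min r k) \<le> H p q r" "H p q r \<le> H (max p k) (max q k) (max r k)"
    "H (min p k) (min q k) (min r k) \<le> k" "k \<le> H (max p k) (max q k) (max r k)"
    using mono[of "min p k" p "min q k" q "min r k" r] mono[of p "max p k" q "max q k" r "max r k"]
      mono[of "min p k" k "min q k" k "min r k" k] mono[of k "max p k" k "max q k" k "max r k"] fixed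
    by auto
  then show ?thesis by linarith
qed

definition three_point_step ::
    "real \<Rightarrow> real \<Rightarrow> (real \<Rightarrow> real \<Rightarrow> real) \<Rightarrow> (real \<Rightarrow> real) \<Rightarrow> real \<Rightarrow> real \<Rightarrow> real \<Rightarrow> real" where
  "three_point_step dt dx F A p q r =
     q - dt / dx * (F q r - F p q) + dt / dx\<^sup>2 * (A r - 2 * A q + A p)"

text \<open>Monotonicity in the centre value: the only place where the CFL condition is used,
  since \<open>U\<^sub>i\<close> enters the update with coefficient \<open>1\<close> minus flux and diffusion slopes.\<close>
lemma three_point_step_mono_centre:
  fixes F :: "real \<Rightarrow> real \<Rightarrow> real" and A :: "real \<Rightarrow> real"
  assumes dt: "0 < dt" and dx: "0 < dx"
    and F_slope1: "\<And>x x' y. x' \<le> x \<Longrightarrow> F x y - F x' y \<le> S1 * (x - x')"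
    and F_slope2: "\<And>x y y'. y' \<le> y \<Longrightarrow> F x y' - F x y \<le> S2 * (y - y')"
    and A_slope: "\<And>x x'. x' \<le> x \<Longrightarrow> 0 \<le> A x - A x' \<and> A x - A x' \<le> M * (x - x')"
    and CFL: "dt / dx * (S1 + S2) + 2 * dt / dx\<^sup>2 * M \<le> 1"
    and le: "q' \<le> q"
  shows "three_point_step dt dx F A p q' r \<le> three_point_step dt dx F A p q r"
proof -
  let ?H = "three_point_step dt dx F A"
  define d where "d = q - q'"
  have d: "0 \<le> d" using le by (simp add: d_def)
  have "?H p q r - ?H p q' r
      = d - dt / dx * ((F q r - F q' r) + (F p q' - F p q)) - 2 * dt / dx\<^sup>2 * (A q - A q')"
    using dx unfolding three_point_step_def d_def by (simp add: field_simps)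
  also have "\<dots> \<ge> d - dt / dx * ((S1 + S2) * d) - 2 * dt / dx\<^sup>2 * (M * d)"
  proof -
    have "dt / dx * ((F q r - F q' r) + (F p q' - F p q)) \<le> dt / dx * ((S1 + S2) * d)"
      using F_slope1[OF le, of r] F_slope2[OF le, of p] dt dx
      by (intro mult_left_mono) (auto simp: d_def algebra_simps)
    moreover have "2 * dt / dx\<^sup>2 * (A q - A q') \<le> 2 * dt / dx\<^sup>2 * (M * d)"
      using A_slope[OF le] dt dx by (intro mult_left_mono) (auto simp: d_def)
    ultimately show ?thesis by linarith
  qed
  finally have "?H p q r - ?H p q' r \<ge> (1 - (dt / dx * (S1 + S2) + 2 * dt / dx\<^sup>2 * M)) * d"
    by (simp add: algebra_simps add_divide_distrib)
  moreover have "0 \<le> (1 - (dt / dx * (S1 + S2) + 2 * dt / dx\<^sup>2 * M)) * d"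
    using CFL d by simp
  ultimately show ?thesis by linarith
qed

lemma three_point_step_mono:
  fixes F :: "real \<Rightarrow> real \<Rightarrow> real" and A :: "real \<Rightarrow> real"
  assumes dt: "0 < dt" and dx: "0 < dx"
    and F_mono1: "\<And>x x' y. x \<le> x' \<Longrightarrow> F x y \<le> F x' y"
    and F_mono2: "\<And>x y y'. y \<le> y' \<Longrightarrow> F x y' \<le> F x y"
    and F_slope1: "\<And>x x' y. x' \<le> x \<Longrightarrow> F x y - F x' y \<le> S1 * (x - x')"
    and F_slope2: "\<And>x y y'. y' \<le> y \<Longrightarrow> F x y' - F x y \<le> S2 * (y - y')"
    and A_slope: "\<And>x x'. x' \<le> x \<Longrightarrow> 0 \<le> A x - A x' \<and> A x - A x' \<le> M * (x - x')"
    and CFL: "dt / dx * (S1 + S2) + 2 * dt / dx\<^sup>2 * M \<le> 1"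
    and le: "p' \<le> p" "q' \<le> q" "r' \<le> r"
  shows "three_point_step dt dx F A p' q' r' \<le> three_point_step dt dx F A p q r"
proof -
  let ?H = "three_point_step dt dx F A"
  have left: "?H p' q r \<le> ?H p q r" if "p' \<le> p" for p p' q r
  proof -
    have "?H p q r - ?H p' q r = dt / dx * (F p q - F p' q) + dt / dx\<^sup>2 * (A p - A p')"
      using dx unfolding three_point_step_def by (simp add: field_simps)
    moreover have "0 \<le> dt / dx * (F p q - F p' q)" "0 \<le> dt / dx\<^sup>2 * (A p - A p')"
      using F_mono1[OF that] A_slope[OF that] dt dx by auto
    ultimately show ?thesis by linarith
  qed
  have right: "?H p q r' \<le> ?H p q r" if "r' \<le> r" for p q r r'
  proof -
    have "?H p q r - ?H p q r' = dt / dx * (F q r' - F q r) + dt / dx\<^sup>2 * (A r - A r')"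
      using dx unfolding three_point_step_def by (simp add: field_simps)
    moreover have "0 \<le> dt / dx * (F q r' - F q r)" "0 \<le> dt / dx\<^sup>2 * (A r - A r')"
      using F_mono2[OF that] A_slope[OF that] dt dx by auto
    ultimately show ?thesis by linarith
  qed
  show ?thesis
    using left[OF le(1), of q' r'] right[OF le(3), of p q]
      three_point_step_mono_centre[OF dt dx F_slope1 F_slope2 A_slope CFL le(2), of p r']
    by linarith
qed

text \<open>The max/min difference of the three-point step is the discrete entropy
  flux form of \<open>|q - k|\<close>; it relies on \<open>|A x - A k| = A (x \<or> k) - A (x \<and> k)\<close>.\<close>
lemma three_point_step_max_min:
  fixes F :: "real \<Rightarrow> real \<Rightarrow> real" and A V :: "_ \<Rightarrow> real"
  assumes A_mono: "\<And>x y. x \<le> y \<Longrightarrow> A x \<le> A y" and dx: "dx \<noteq> 0"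
  shows "three_point_step dt dx F A (max (V (i - 1)) k) (max (V i) k) (max (V (i + 1)) k)
         - three_point_step dt dx F A (min (V (i - 1)) k) (min (V i) k) (min (V (i + 1)) k)
       = \<bar>V i - k\<bar>
         - dt * Dminus dx (\<lambda>j. F (max (V j) k) (max (V (j + 1)) k) - F (min (V j) k) (min (V (j + 1)) k)) i
         + dt * Dminus dx (Dplus dx (\<lambda>j. \<bar>A (V j) - A k\<bar>)) i"
proof -
  have absA: "\<bar>A x - A k\<bar> = A (max x k) - A (min x k)" for x
    using A_mono[of x k] A_mono[of k x] by (cases "x \<le> k") (auto simp: max_def min_def)
  show ?thesis
    using dx unfolding Dminus_def Dplus_def three_point_step_def absA
    by (simp add: field_simps power2_eq_square max_def min_def)
qed

lemma scheme_Suc_three_point: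
  fixes fh :: "real \<Rightarrow> real \<Rightarrow> real" and a u0 :: "real \<Rightarrow> real" and b c lam dx dt :: real and n :: nat
  assumes "dx \<noteq> 0"
  defines "V \<equiv> scheme fh a b c lam dx dt u0 n"
  shows "scheme fh a b c lam dx dt u0 (Suc n) i
       = three_point_step dt dx fh (Aint a) (V (i - 1)) (V i) (V (i + 1)) + dt * b * lap_disc c lam dx V i"
  using assms unfolding V_def three_point_step_def
  by (simp add: Let_def Dminus_def Dplus_def field_simps power2_eq_square)

lemma abs_add_le_sign:
  fixes x y s :: real
  assumes sgn: "x + y \<noteq> 0 \<longrightarrow> s = sgn (x + y)" and s: "\<bar>s\<bar> \<le> 1"
  shows "\<bar>x + y\<bar> \<le> \<bar>x\<bar> + s * y"
proof -
  have "\<bar>x + y\<bar> = s * (x + y)"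
    using sgn by (cases "x + y = 0") (auto simp: sgn_mult_abs abs_sgn)
  moreover have "s * x \<le> \<bar>x\<bar>"
    using s abs_mult[of s x] abs_ge_self[of "s * x"] mult_right_mono[OF s abs_ge_zero[of x]] by linarith
  ultimately show ?thesis by (simp add: distrib_left)
qed

text \<open>Without the nonlocal term the
  step is the monotone three-point map, whose Kato inequality gives the estimate; the
  nonlocal term contributes \<open>dt s b L\<langle>U\<rangle>\<close> by the choice of \<open>s\<close>.\<close>
lemma scheme_entropy_step:
  fixes fh :: "real \<Rightarrow> real \<Rightarrow> real" and a u0 :: "real \<Rightarrow> real"
    and b c lam dx dt k s S1 S2 M :: real and n :: nat and i :: int
  defines "U \<equiv> scheme fh a b c lam dx dt u0"
  assumes dt: "0 < dt" and dx: "0 < dx"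
    and fh_mono1: "\<And>x x' y. x \<le> x' \<Longrightarrow> fh x y \<le> fh x' y"
    and fh_mono2: "\<And>x y y'. y \<le> y' \<Longrightarrow> fh x y' \<le> fh x y"
    and fh_slope1: "\<And>x x' y. x' \<le> x \<Longrightarrow> fh x y - fh x' y \<le> S1 * (x - x')"
    and fh_slope2: "\<And>x y y'. y' \<le> y \<Longrightarrow> fh x y' - fh x y \<le> S2 * (y - y')"
    and A_slope: "\<And>x x'. x' \<le> x \<Longrightarrow> 0 \<le> Aint a x - Aint a x' \<and> Aint a x - Aint a x' \<le> M * (x - x')"
    and CFL: "dt / dx * (S1 + S2) + 2 * dt / dx\<^sup>2 * M \<le> 1"
    and sgn: "U (Suc n) i - k \<noteq> 0 \<longrightarrow> s = sgn (U (Suc n) i - k)" and s: "\<bar>s\<bar> \<le> 1"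
  shows "\<bar>U (Suc n) i - k\<bar> - \<bar>U n i - k\<bar>
      + dt * Dminus dx (\<lambda>j. fh (max (U n j) k) (max (U n (j + 1)) k)
                             - fh (min (U n j) k) (min (U n (j + 1)) k)) i
      - dt * Dminus dx (Dplus dx (\<lambda>j. \<bar>Aint a (U n j) - Aint a k\<bar>)) i
    \<le> dt * s * b * lap_disc c lam dx (U n) i"
proof -
  define V where "V = U n"
  define H where "H = three_point_step dt dx fh (Aint a)"
  have "\<bar>H (V (i - 1)) (V i) (V (i + 1)) - k\<bar>
      \<le> H (max (V (i - 1)) k) (max (V i) k) (max (V (i + 1)) k)
        - H (min (V (i - 1)) k) (min (V i) k) (min (V (i + 1)) k)"
    unfolding H_def
  proof (rule monotone_map_kato)
    show "three_point_step dt dx fh (Aint a) p' q' r' \<le> three_point_step dt dx fh (Aint a) p q r"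
      if "p' \<le> p" "q' \<le> q" "r' \<le> r" for p q r p' q' r'
      using three_point_step_mono[OF dt dx fh_mono1 fh_mono2 fh_slope1 fh_slope2 A_slope CFL that] .
  qed (simp add: three_point_step_def)
  also have "\<dots> = \<bar>V i - k\<bar>
      - dt * Dminus dx (\<lambda>j. fh (max (V j) k) (max (V (j + 1)) k) - fh (min (V j) k) (min (V (j + 1)) k)) i
      + dt * Dminus dx (Dplus dx (\<lambda>j. \<bar>Aint a (V j) - Aint a k\<bar>)) i"
    unfolding H_def using A_slope dx by (intro three_point_step_max_min) auto
  finally have kato: "\<bar>H (V (i - 1)) (V i) (V (i + 1)) - k\<bar> \<le> \<dots>" .
  have step: "U (Suc n) i - k = (H (V (i - 1)) (V i) (V (i + 1)) - k) + dt * b * lap_disc c lam dx V i"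
    unfolding H_def V_def U_def using scheme_Suc_three_point dx by simp
  show ?thesis
    using abs_add_le_sign[of "H (V (i - 1)) (V i) (V (i + 1)) - k" "dt * b * lap_disc c lam dx V i" s]
      sgn s kato unfolding step V_def by (simp add: algebra_simps)
qed

theorem mainTheorem10:
  fixes f a :: "real \<Rightarrow> real" and fh fh1 fh2 :: "real \<Rightarrow> real \<Rightarrow> real"
    and b c lam dx dt k :: real and u0 :: "real \<Rightarrow> real"
  assumes f_lip: "\<exists>L. L-lipschitz_on UNIV f" and f0: "f 0 = 0"
    and a_lip: "\<exists>L. L-lipschitz_on UNIV a" and a_nonneg: "\<forall>s. 0 \<le> a s"
    and a_bdd: "bounded (range a)"
    and b_nonneg: "0 \<le> b" and lam_pos: "0 < lam" and lam_lt1: "lam < 1" and c_pos: "0 < c"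
    and fh_deriv: "\<forall>x y. ((\<lambda>p. fh (fst p) (snd p)) has_derivative
                       (\<lambda>h. fh1 x y * fst h + fh2 x y * snd h)) (at (x, y))"
    and fh1_cont: "continuous_on UNIV (\<lambda>p. fh1 (fst p) (snd p))"
    and fh2_cont: "continuous_on UNIV (\<lambda>p. fh2 (fst p) (snd p))"
    and fh_lip: "\<exists>L. L-lipschitz_on UNIV (\<lambda>p. fh (fst p) (snd p))"
    and fh_cons: "\<forall>u. fh u u = f u"
    and fh_mono1: "\<forall>x x' y. x \<le> x' \<longrightarrow> fh x y \<le> fh x' y"
    and fh_mono2: "\<forall>x y y'. y \<le> y' \<longrightarrow> fh x y' \<le> fh x y"
    and dx_pos: "0 < dx" and dt_pos: "0 < dt"
    and u0_L1: "integrable lborel u0" and u0_BV: "BV u0"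
    and CFL: "dt / dx * ((SUP p. \<bar>fh1 (fst p) (snd p)\<bar>) + (SUP p. \<bar>fh2 (fst p) (snd p)\<bar>))
              + 2 * dt / dx\<^sup>2 * (SUP s. \<bar>a s\<bar>) + b * dlam c lam * dt / dx powr lam \<le> 1"
  shows "\<forall>n i s.
     (let U = scheme fh a b c lam dx dt u0;
          eta = (\<lambda>m j. \<bar>U m j - k\<bar>);
          Q = (\<lambda>j. fh (max (U n j) k) (max (U n (j + 1)) k)
                   - fh (min (U n j) k) (min (U n (j + 1)) k))
      in (U (Suc n) i - k \<noteq> 0 \<longrightarrow> s = sgn (U (Suc n) i - k)) \<and> \<bar>s\<bar> \<le> 1 \<longrightarrow>
         eta (Suc n) i - eta n i + dt * Dminus dx Q i
           - dt * Dminus dx (Dplus dx (\<lambda>j. \<bar>Aint a (U n j) - Aint a k\<bar>)) i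
         \<le> dt * s * b * lap_disc c lam dx (U n) i)"
proof -
  obtain L where L: "L-lipschitz_on UNIV (\<lambda>p. fh (fst p) (snd p))" using fh_lip by blast
  obtain La where La: "La-lipschitz_on UNIV a" using a_lip by blast
  have "0 \<le> b * dlam c lam * dt / dx powr lam"
    using b_nonneg dlam_nonneg[of c lam] c_pos dt_pos dx_pos by simp
  then have CFL_local: "dt / dx * ((SUP p. \<bar>fh1 (fst p) (snd p)\<bar>) + (SUP p. \<bar>fh2 (fst p) (snd p)\<bar>))
              + 2 * dt / dx\<^sup>2 * (SUP s. \<bar>a s\<bar>) \<le> 1"
    using CFL by linarith
  note step = scheme_entropy_step[OF dt_pos dx_pos _ _ flux_slope_bounds[OF fh_deriv L]
      Aint_slope_bounds[OF La _ a_bdd] CFL_local]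
  show ?thesis
    unfolding Let_def using step fh_mono1 fh_mono2 a_nonneg by blast
qed

end
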